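(* Let $\eta^+,\eta^-\in(0,1]$, $\eta_d=\frac1{\eta^-}-\eta^+$, $\mathbb{P}_\xi$ a probability measure on $[-1,1]$ with mean zero and cumulative distribution function $F$, $\varphi(z)=\int_{-1}^zF(\xi)\mathrm{d}\xi$, $\dot y(x^b,x^r)=\eta^+x^b-\eta_d x^r\varphi(-x^b/x^r)$ for $x^r>0$, $\dot y(x^b,0)=\eta^+x^b-\eta_d[x^b]^-$, $\dot y^\star\in\mathbb{R}$, and let $g:\mathbb{R}_+\to\mathbb{R}$ be the unique function with $\dot y(g(x^r),x^r)=\dot y^\star$ for all $x^r\ge0$ (it is convex, continuous and nondecreasing). Let $T>0$, $c^b>0$, $c^r\ge0$, and $\bar x^r\ge0$, and consider the problem $\min_{x^r\in[0,\bar x^r]} T\big(c^b g(x^r)-c^r x^r\big)$. Let $g'_+$ and $g'_-$ denote the right and left derivatives of $g$. Define $x^r_\ast$ as follows: if $\bar x^r=0$ or $g'_+(0)\ge c^r/c^b$, then $x^r_\ast=0$; if $\bar x^r>0$ and $g'_-(\bar x^r)<c^r/c^b$, then $x^r_\ast=\bar x^r$; otherwise (i.e. $\bar x^r>0$, $g'_+(0)<c^r/c^b\le g'_-(\bar x^r)$), $x^r_\ast=\min\mathcal{X}_\star$, where $\mathcal{X}_\star=\{x\in(0,\bar x^r]: g'_-(x)\le c^r/c^b\le g'_+(x)\}$ is nonempty and compact. Then $x^r_\ast$ is an optimal solution of the problem.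
   Context: $[a]^-=\max\{-a,0\}$. In the paper, $[0,\bar x^r]$ is the feasible set of the reduced battery bidding problem in the reserve variable $x^r$ (base power $x^b=g(x^r)$), $c^b$ is the price of base power and $c^r$ the reserve price; $\mathcal{X}_\star$ is the set of zeros of the net marginal cost $T(c^bg'(x^r)-c^r)$ in the subdifferential sense. *)

theory Defs
  imports "HOL-Probability.Probability"
begin

definition neg_part :: "real \<Rightarrow> real" where
  "neg_part a = max (- a) 0"

definition phi :: "real measure \<Rightarrow> real \<Rightarrow> real" where
  "phi M z = integral {-1..z} (cdf M)"

definition ydot :: "real \<Rightarrow> real \<Rightarrow> real measure \<Rightarrow> real \<Rightarrow> real \<Rightarrow> real" where
  "ydot etap etam M xb xr =
     (let etad = 1 / etam - etap in
      if xr > 0 then etap * xb - etad * xr * phi M (- xb / xr)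
      else etap * xb - etad * neg_part xb)"

definition rderiv :: "(real \<Rightarrow> real) \<Rightarrow> real \<Rightarrow> real" where
  "rderiv g x = Lim (at_right x) (\<lambda>y. (g y - g x) / (y - x))"

definition lderiv :: "(real \<Rightarrow> real) \<Rightarrow> real \<Rightarrow> real" where
  "lderiv g x = Lim (at_left x) (\<lambda>y. (g y - g x) / (y - x))"

end

theory Submission
  imports Defs
begin

(* By Fubini, x^r phi(-x^b / x^r) = E[(x^b + x^r xi)^-], so
   ydot(x^b, x^r) = eta^+ x^b - eta_d E[(x^b + x^r xi)^-] is jointly concave in (x^b, x^r) and,
   as eta_d >= 0, strictly increasing in x^b; hence its level function g is convex. Jensen's
   inequality with E xi = 0 gives E[(b + r xi)^-] >= b^-, i.e. ydot(b, r) <= ydot(b, 0), whence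
   g(0) <= g(r). For such g the one-sided derivatives are monotone limits of difference quotients,
   so g(x) - (c^r/c^b) x is minimised over [0, xbar] at an interior point x exactly when
   g'_-(x) <= c^r/c^b <= g'_+(x), with the one-sided versions of this condition at 0 and xbar.
   In the remaining case the least minimiser, which exists by continuity and compactness, belongs
   to X_star and lies below every element of X_star, since all of those are minimisers. *)

definition slope :: "(real \<Rightarrow> real) \<Rightarrow> real \<Rightarrow> real \<Rightarrow> real" where
  "slope g x y = (g y - g x) / (y - x)"

lemma slope_commute: "slope g x y = slope g y x"
  unfolding slope_def by (metis minus_diff_eq minus_divide_divide)

lemma rderiv_eq_Lim_slope: "rderiv g x = Lim (at_right x) (slope g x)"
  by (simp add: rderiv_def slope_def[abs_def])

lemma lderiv_eq_Lim_slope: "lderiv g x = Lim (at_left x) (slope g x)"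
  by (simp add: lderiv_def slope_def[abs_def])

lemma le_slope_iff: "x < y \<Longrightarrow> c \<le> slope g x y \<longleftrightarrow> g x - c * x \<le> g y - c * y"
  by (simp add: slope_def pos_le_divide_eq algebra_simps)

lemma slope_le_iff: "y < x \<Longrightarrow> slope g x y \<le> c \<longleftrightarrow> g x - c * x \<le> g y - c * y"
  by (simp add: slope_def neg_divide_le_eq algebra_simps)

lemma convex_on_slope_mono:
  assumes cv: "convex_on I g" and I: "x \<in> I" "y \<in> I" "y' \<in> I"
    and y: "y < y'" "y \<noteq> x" "y' \<noteq> x"
  shows "slope g x y \<le> slope g x y'"
proof -
  consider "y' < x" | "y < x" "x < y'" | "x < y" using y by linarith
  then show ?thesis
  proof cases
    case 1
    then show ?thesis
      using convex_on_slope_le(2)[OF cv I(2,1), of y'] I y by (simp add: slope_def)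
  next
    case 2
    have "slope g x y \<le> slope g y' y"
      using convex_on_slope_le(1)[OF cv I(2,3), of x] 2 by (simp add: slope_def)
    also have "\<dots> \<le> slope g y' x"
      using convex_on_slope_le(2)[OF cv I(2,3), of x] 2 by (simp add: slope_def)
    finally show ?thesis by (simp add: slope_commute)
  next
    case 3
    then have "slope g y x \<le> slope g y' x"
      using convex_on_slope_le(1)[OF cv I(1,3), of y] y by (simp add: slope_def)
    then show ?thesis by (metis slope_commute)
  qed
qed

lemma continuous_attains_least_min:
  fixes h :: "real \<Rightarrow> real"
  assumes "compact S" "S \<noteq> {}" "continuous_on S h"
  obtains a where "a \<in> S" "\<And>y. y \<in> S \<Longrightarrow> h a \<le> h y"
    "\<And>x. x \<in> S \<Longrightarrow> (\<And>y. y \<in> S \<Longrightarrow> h x \<le> h y) \<Longrightarrow> a \<le> x"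
proof -
  obtain m where m: "m \<in> S" "\<forall>y\<in>S. h m \<le> h y"
    using continuous_attains_inf[OF assms] by blast
  define A where "A = {x \<in> S. h x = h m}"
  have "closed A"
    unfolding A_def using assms
    by (intro continuous_closed_preimage_constant compact_imp_closed)
  moreover have "bounded A"
    unfolding A_def using compact_imp_bounded[OF assms(1)] by (rule bounded_subset) auto
  ultimately have "compact A"
    by (simp add: compact_eq_bounded_closed)
  moreover have "A \<noteq> {}"
    using m by (auto simp: A_def)
  ultimately obtain a where "a \<in> A" "\<forall>x\<in>A. a \<le> x"
    using compact_attains_inf by blast
  then show ?thesis
  proof (intro that)
    show "a \<in> S" "\<And>y. y \<in> S \<Longrightarrow> h a \<le> h y"
      using \<open>a \<in> A\<close> m by (auto simp: A_def)
  next
    fix x assume "x \<in> S" and "\<And>y. y \<in> S \<Longrightarrow> h x \<le> h y"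
    then have "x \<in> A"
      using m by (auto simp: A_def intro: order.antisym)
    then show "a \<le> x"
      using \<open>\<forall>x\<in>A. a \<le> x\<close> by blast
  qed
qed

definition optimal_reserve :: "(real \<Rightarrow> real) \<Rightarrow> real \<Rightarrow> real \<Rightarrow> real" where
  "optimal_reserve g c xbar =
     (if xbar = 0 \<or> rderiv g 0 \<ge> c then 0
      else if xbar > 0 \<and> lderiv g xbar < c then xbar
      else (LEAST x. x \<in> {x. 0 < x \<and> x \<le> xbar \<and> lderiv g x \<le> c \<and> c \<le> rderiv g x}))"

context
  fixes g :: "real \<Rightarrow> real"
  assumes convex: "convex_on {0..} g"
begin

lemma tendsto_lderiv:
  assumes x: "0 < x"
  shows "(slope g x \<longlongrightarrow> lderiv g x) (at_left x)"
proof -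
  have "(slope g x \<longlongrightarrow> Sup (slope g x ` ({..<x} \<inter> {0..}))) (at x within {..<x} \<inter> {0..})"
  proof (rule Lim_left_bound)
    fix a b :: real assume "a \<in> {0..}" "b < x" "a \<le> b"
    then show "slope g x a \<le> slope g x b"
      using convex_on_slope_mono[OF convex, of x a b] x by (cases "a = b") auto
  next
    fix b :: real assume "b \<in> {0..}" "b < x"
    then show "slope g x b \<le> slope g x (x + 1)"
      using convex_on_slope_mono[OF convex, of x b "x + 1"] x by auto
  qed
  moreover have "at x within {..<x} \<inter> {0..} = at_left x"
    by (rule at_within_nhd[of _ "{0<..}"]) (use x in auto)
  ultimately have "(slope g x \<longlongrightarrow> Sup (slope g x ` {0..<x})) (at_left x)"
    by (simp add: Int_commute atLeastLessThan_def)
  moreover from this have "lderiv g x = Sup (slope g x ` {0..<x})"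
    unfolding lderiv_eq_Lim_slope by (intro tendsto_Lim) auto
  ultimately show ?thesis by simp
qed

lemma slope_le_lderiv:
  assumes "0 \<le> y" "y < x"
  shows "slope g x y \<le> lderiv g x"
proof (rule tendsto_lowerbound[OF tendsto_lderiv])
  show "\<forall>\<^sub>F z in at_left x. slope g x y \<le> slope g x z"
    using eventually_at_left_real[OF \<open>y < x\<close>]
    by eventually_elim (use assms convex_on_slope_mono[OF convex, of x y] in auto)
qed (use assms in auto)

lemma lderiv_le_slope:
  assumes "0 < x" "x < y"
  shows "lderiv g x \<le> slope g x y"
proof (rule tendsto_upperbound[OF tendsto_lderiv])
  show "\<forall>\<^sub>F z in at_left x. slope g x z \<le> slope g x y"
    using eventually_at_left_real[OF \<open>0 < x\<close>]
    by eventually_elim (use assms convex_on_slope_mono[OF convex, of x _ y] in auto)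
qed (use assms in auto)

lemma lderiv_le_imp_minimal_left:
  assumes "0 < x" "lderiv g x \<le> c" "0 \<le> y" "y \<le> x"
  shows "g x - c * x \<le> g y - c * y"
proof (cases "x = y")
  case False
  then show ?thesis
    using assms slope_le_lderiv[of y x] slope_le_iff[of y x g c] by auto
qed simp

lemma minimal_left_imp_lderiv_le:
  assumes "0 < x" and min: "\<And>y. 0 \<le> y \<Longrightarrow> y < x \<Longrightarrow> g x - c * x \<le> g y - c * y"
  shows "lderiv g x \<le> c"
proof (rule tendsto_upperbound[OF tendsto_lderiv])
  show "\<forall>\<^sub>F y in at_left x. slope g x y \<le> c"
    using eventually_at_left_real[OF \<open>0 < x\<close>]
    by eventually_elim (use min slope_le_iff in auto)
qed (use assms in auto)

(* Rules out an upward jump of g at 0 and an infinite negative right slope there. *)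
context
  assumes min_at_0: "\<And>x. 0 \<le> x \<Longrightarrow> g 0 \<le> g x"
begin

lemma tendsto_rderiv:
  assumes x: "0 \<le> x"
  shows "(slope g x \<longlongrightarrow> rderiv g x) (at_right x)"
proof -
  obtain K where K: "\<And>a. x < a \<Longrightarrow> K \<le> slope g x a"
  proof (cases "x = 0")
    case True
    show ?thesis
      by (rule that[of 0]) (use True min_at_0 in \<open>auto simp: slope_def\<close>)
  next
    case False
    show ?thesis
      by (rule that[of "slope g x 0"]) (use False x convex_on_slope_mono[OF convex] in auto)
  qed
  have "(slope g x \<longlongrightarrow> Inf (slope g x ` ({x<..} \<inter> UNIV))) (at x within {x<..} \<inter> UNIV)"
  proof (rule Lim_right_bound)
    fix a b assume "x < a" "a \<le> b"
    then show "slope g x a \<le> slope g x b"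
      using convex_on_slope_mono[OF convex, of x a b] x by (cases "a = b") auto
  qed (use K in auto)
  then have "(slope g x \<longlongrightarrow> Inf (slope g x ` {x<..})) (at_right x)"
    by simp
  moreover from this have "rderiv g x = Inf (slope g x ` {x<..})"
    unfolding rderiv_eq_Lim_slope by (intro tendsto_Lim) auto
  ultimately show ?thesis by simp
qed

lemma rderiv_le_slope:
  assumes "0 \<le> x" "x < y"
  shows "rderiv g x \<le> slope g x y"
proof (rule tendsto_upperbound[OF tendsto_rderiv])
  show "\<forall>\<^sub>F z in at_right x. slope g x z \<le> slope g x y"
    using eventually_at_right_real[OF \<open>x < y\<close>]
    by eventually_elim (use assms convex_on_slope_mono[OF convex, of x _ y] in auto)
qed (use assms in auto)

lemma lderiv_le_rderiv:
  assumes "0 < x"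
  shows "lderiv g x \<le> rderiv g x"
proof (rule tendsto_lowerbound[OF tendsto_rderiv])
  show "\<forall>\<^sub>F y in at_right x. lderiv g x \<le> slope g x y"
    using eventually_at_right_real[OF less_add_one]
    by eventually_elim (use assms lderiv_le_slope in auto)
qed (use assms in auto)

lemma continuous_on_nonneg: "continuous_on {0..} g"
  unfolding continuous_on_eq_continuous_within
proof
  fix x :: real assume x: "x \<in> {0..}"
  show "continuous (at x within {0..}) g"
  proof (cases "x = 0")
    case False
    have "continuous_on {0<..} g"
      using convex_on_subset[OF convex, of "{0<..}"] by (intro convex_on_continuous) (auto simp: subset_eq)
    then have "isCont g x"
      using x False by (simp add: continuous_on_eq_continuous_at)
    then show ?thesis
      by (rule continuous_at_imp_continuous_within)
  next
    case True
    have "\<forall>\<^sub>F t in at (0::real) within {0..}. t \<in> {0..1}"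
      unfolding eventually_at by (auto simp: dist_real_def intro!: exI[of _ 1])
    then have bounds: "\<forall>\<^sub>F t in at 0 within {0..}. g 0 \<le> g t \<and> g t \<le> (1 - t) * g 0 + t * g 1"
      by eventually_elim (use min_at_0 convex_onD[OF convex, of _ 0 1] in auto)
    show ?thesis
      unfolding True continuous_within
    proof (rule tendsto_sandwich)
      show "\<forall>\<^sub>F t in at 0 within {0..}. g 0 \<le> g t"
        using bounds by (rule eventually_mono) simp
      show "\<forall>\<^sub>F t in at 0 within {0..}. g t \<le> (1 - t) * g 0 + t * g 1"
        using bounds by (rule eventually_mono) simp
      show "((\<lambda>t. (1 - t) * g 0 + t * g 1) \<longlongrightarrow> g 0) (at 0 within {0..})"
        by (auto intro!: tendsto_eq_intros)
    qed simp
  qed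
qed

lemma le_rderiv_imp_minimal_right:
  assumes "0 \<le> x" "c \<le> rderiv g x" "x \<le> y"
  shows "g x - c * x \<le> g y - c * y"
proof (cases "x = y")
  case False
  then show ?thesis
    using assms rderiv_le_slope[of x y] le_slope_iff[of x y c g] by auto
qed simp

lemma minimal_right_imp_le_rderiv:
  assumes "0 \<le> x" "x < b" and min: "\<And>y. x < y \<Longrightarrow> y \<le> b \<Longrightarrow> g x - c * x \<le> g y - c * y"
  shows "c \<le> rderiv g x"
proof (rule tendsto_lowerbound[OF tendsto_rderiv])
  show "\<forall>\<^sub>F y in at_right x. c \<le> slope g x y"
    using eventually_at_right_real[OF \<open>x < b\<close>]
    by eventually_elim (use min le_slope_iff in auto)
qed (use assms in auto)

lemma subgradient_imp_minimal:
  assumes "0 < x" "lderiv g x \<le> c" "c \<le> rderiv g x" "0 \<le> y"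
  shows "g x - c * x \<le> g y - c * y"
  using assms le_rderiv_imp_minimal_right lderiv_le_imp_minimal_left
  by (cases "x \<le> y") auto

lemma Least_subgradient_point_minimal:
  assumes xbar: "0 < xbar" and "rderiv g 0 < c" "c \<le> lderiv g xbar"
  defines "X \<equiv> {x. 0 < x \<and> x \<le> xbar \<and> lderiv g x \<le> c \<and> c \<le> rderiv g x}"
  shows "(LEAST x. x \<in> X) \<in> {0..xbar} \<and>
    (\<forall>y\<in>{0..xbar}. g (LEAST x. x \<in> X) - c * (LEAST x. x \<in> X) \<le> g y - c * y)"
proof -
  let ?h = "\<lambda>x. g x - c * x"
  have cont: "continuous_on {0..xbar} ?h"
    using continuous_on_subset[OF continuous_on_nonneg, of "{0..xbar}"]
    by (auto intro!: continuous_intros)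
  obtain a where "a \<in> {0..xbar}"
    and a_min: "\<And>y. y \<in> {0..xbar} \<Longrightarrow> ?h a \<le> ?h y"
    and a_least: "\<And>x. x \<in> {0..xbar} \<Longrightarrow> (\<And>y. y \<in> {0..xbar} \<Longrightarrow> ?h x \<le> ?h y) \<Longrightarrow> a \<le> x"
    by (rule continuous_attains_least_min[OF compact_Icc _ cont]) (use xbar in auto)
  then have a: "0 \<le> a" "a \<le> xbar" by auto
  have "a \<noteq> 0"
    using minimal_right_imp_le_rderiv[of 0 xbar c] a_min assms(2) xbar by force
  with a have "0 < a" by simp
  have "lderiv g a \<le> c"
    using minimal_left_imp_lderiv_le[OF \<open>0 < a\<close>] a a_min by simp
  moreover have "c \<le> rderiv g a"
  proof (cases "a = xbar")
    case True
    then show ?thesis using lderiv_le_rderiv[OF xbar] assms(3) by simp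
  next
    case False
    then show ?thesis
      using minimal_right_imp_le_rderiv[of a xbar c] a a_min by simp
  qed
  ultimately have "a \<in> X"
    using \<open>0 < a\<close> a by (simp add: X_def)
  moreover have "a \<le> x" if "x \<in> X" for x
    using that subgradient_imp_minimal[of x c] a_least[of x] by (simp add: X_def)
  ultimately have "(LEAST x. x \<in> X) = a"
    by (intro Least_equality) auto
  then show ?thesis using a a_min by auto
qed

lemma optimal_reserve_minimal:
  assumes "0 \<le> xbar"
  shows "optimal_reserve g c xbar \<in> {0..xbar} \<and>
    (\<forall>x\<in>{0..xbar}. g (optimal_reserve g c xbar) - c * optimal_reserve g c xbar \<le> g x - c * x)"
proof -
  consider (left) "xbar = 0 \<or> c \<le> rderiv g 0"
    | (right) "\<not> (xbar = 0 \<or> c \<le> rderiv g 0)" "lderiv g xbar < c"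
    | (interior) "0 < xbar" "rderiv g 0 < c" "c \<le> lderiv g xbar"
    using assms by force
  then show ?thesis
  proof cases
    case left
    then show ?thesis
      using assms le_rderiv_imp_minimal_right[of 0 c] by (auto simp: optimal_reserve_def)
  next
    case right
    then show ?thesis
      using assms lderiv_le_imp_minimal_left[of xbar c] by (auto simp: optimal_reserve_def)
  next
    case interior
    then show ?thesis
      using Least_subgradient_point_minimal[OF interior] by (simp add: optimal_reserve_def)
  qed
qed

end

end

lemma convex_on_implicit_function:
  fixes Y :: "real \<Rightarrow> 'a::real_vector \<Rightarrow> real" and g :: "'a \<Rightarrow> real"
  assumes concave: "concave_on (UNIV \<times> S) (\<lambda>(b, r). Y b r)"
    and increasing: "\<And>b b' r. r \<in> S \<Longrightarrow> b < b' \<Longrightarrow> Y b r < Y b' r"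
    and level: "\<And>r. r \<in> S \<Longrightarrow> Y (g r) r = y"
  shows "convex_on S g"
proof (rule convex_onI)
  have combination: "(1 - t) *\<^sub>R x + t *\<^sub>R z \<in> S" if "x \<in> S" "z \<in> S" "0 \<le> t" "t \<le> 1" for x z and t :: real
    using convexD[OF concave_on_imp_convex[OF concave], of "(0, x)" "(0, z)" "1 - t" t] that by simp
  then show "convex S"
    unfolding convex_alt by (simp add: add.commute)
  fix t :: real and x z assume t: "0 < t" "t < 1" and xz: "x \<in> S" "z \<in> S"
  define r where "r = (1 - t) *\<^sub>R x + t *\<^sub>R z"
  define b where "b = (1 - t) * g x + t * g z"
  have "r \<in> S" using combination xz t by (simp add: r_def)
  have "Y (g r) r = (1 - t) * Y (g x) x + t * Y (g z) z"
    using level xz \<open>r \<in> S\<close> by (simp add: algebra_simps)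
  also have "\<dots> \<le> Y b r"
    using concave_onD[OF concave, of t "(g x, x)" "(g z, z)"] t xz by (simp add: r_def b_def)
  finally have "\<not> b < g r"
    using increasing[OF \<open>r \<in> S\<close>, of b "g r"] by linarith
  then show "g ((1 - t) *\<^sub>R x + t *\<^sub>R z) \<le> (1 - t) * g x + t * g z"
    by (simp add: r_def b_def)
qed

context real_distribution
begin

lemma nn_integral_pos_part_eq_cdf:
  assumes support: "measure M {-1..1} = 1"
  shows "(\<integral>\<^sup>+\<xi>. ennreal (max (z - \<xi>) 0) \<partial>M) = (\<integral>\<^sup>+t. ennreal (indicator {-1..z} t * cdf M t) \<partial>lborel)"
proof -
  interpret pair_sigma_finite lborel M ..
  \<comment> \<open>Tonelli, with (z - xi)^+ the Lebesgue measure of [xi, z], and xi >= -1 almost surely.\<close>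
  define f where "f t \<xi> = ennreal (if -1 \<le> t \<and> t \<le> z \<and> \<xi> \<le> t then 1 else 0)" for t \<xi> :: real
  have "AE \<xi> in M. \<xi> \<in> {-1..1}"
    by (rule AE_prob_1) (use support in simp)
  then have "(\<integral>\<^sup>+\<xi>. ennreal (max (z - \<xi>) 0) \<partial>M) = (\<integral>\<^sup>+\<xi>. (\<integral>\<^sup>+t. f t \<xi> \<partial>lborel) \<partial>M)"
  proof (intro nn_integral_cong_AE, eventually_elim)
    case (elim \<xi>)
    then have "(\<integral>\<^sup>+t. f t \<xi> \<partial>lborel) = (\<integral>\<^sup>+t. indicator {\<xi>..z} t \<partial>lborel)"
      by (intro nn_integral_cong) (auto simp: f_def indicator_def)
    then show ?case by (cases "\<xi> \<le> z") auto
  qed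
  also have "\<dots> = (\<integral>\<^sup>+t. (\<integral>\<^sup>+\<xi>. f t \<xi> \<partial>M) \<partial>lborel)"
    by (rule Fubini') (unfold f_def, measurable)
  also have "\<dots> = (\<integral>\<^sup>+t. ennreal (indicator {-1..z} t * cdf M t) \<partial>lborel)"
  proof (rule nn_integral_cong)
    fix t :: real
    have "(\<integral>\<^sup>+\<xi>. f t \<xi> \<partial>M) = (\<integral>\<^sup>+\<xi>. ennreal (indicator {-1..z} t) * indicator {..t} \<xi> \<partial>M)"
      by (intro nn_integral_cong) (auto simp: f_def indicator_def)
    also have "\<dots> = ennreal (indicator {-1..z} t) * emeasure M {..t}"
      by (simp add: nn_integral_cmult_indicator)
    also have "\<dots> = ennreal (indicator {-1..z} t * cdf M t)"
      by (simp add: cdf_def2 emeasure_eq_measure ennreal_mult)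
    finally show "(\<integral>\<^sup>+\<xi>. f t \<xi> \<partial>M) = ennreal (indicator {-1..z} t * cdf M t)" .
  qed
  finally show ?thesis .
qed

lemma phi_eq_expectation_pos_part:
  assumes support: "measure M {-1..1} = 1" and integrable_id: "integrable M (\<lambda>x. x)"
  shows "phi M z = (\<integral>\<xi>. max (z - \<xi>) 0 \<partial>M)"
proof -
  define E where "E = (\<integral>\<xi>. max (z - \<xi>) 0 \<partial>M)"
  have "integrable M (\<lambda>\<xi>. max (z - \<xi>) 0)"
    using integrable_id by (intro integrable_max Bochner_Integration.integrable_diff) auto
  then have "(\<integral>\<^sup>+t. ennreal (indicator {-1..z} t * cdf M t) \<partial>lborel) = ennreal E"
    unfolding E_def nn_integral_pos_part_eq_cdf[OF support, symmetric]
    by (rule nn_integral_eq_integral) auto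
  moreover have "cdf M \<in> borel_measurable borel"
    by (rule borel_measurable_mono) (simp add: mono_def cdf_nondecreasing)
  moreover have "0 \<le> E"
    unfolding E_def by (rule Bochner_Integration.integral_nonneg) auto
  ultimately have "((\<lambda>t. indicator {-1..z} t * cdf M t) has_integral E) UNIV"
    by (intro nn_integral_has_integral) (auto simp: cdf_nonneg)
  moreover have "(\<lambda>t. indicator {-1..z} t * cdf M t) = (\<lambda>t. if t \<in> {-1..z} then cdf M t else 0)"
    by (auto simp: indicator_def)
  ultimately have "(cdf M has_integral E) {-1..z}"
    by (simp only: has_integral_restrict_UNIV)
  then show ?thesis
    unfolding phi_def E_def by (rule integral_unique)
qed

end

lemma convex_on_neg_part: "convex_on UNIV neg_part"
proof (rule convex_onI)
  fix t x y :: real assume t: "0 < t" "t < 1"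
  have "- x \<le> neg_part x" "0 \<le> neg_part x" "- y \<le> neg_part y" "0 \<le> neg_part y"
    by (simp_all add: neg_part_def)
  then have "(1 - t) * - x \<le> (1 - t) * neg_part x" "t * - y \<le> t * neg_part y"
    "0 \<le> (1 - t) * neg_part x" "0 \<le> t * neg_part y"
    using t by (simp_all only: mult_left_mono mult_nonneg_nonneg less_imp_le diff_ge_0_iff_ge)
  moreover have "neg_part ((1 - t) *\<^sub>R x + t *\<^sub>R y) = max ((1 - t) * - x + t * - y) 0"
    by (simp add: neg_part_def algebra_simps)
  ultimately show "neg_part ((1 - t) *\<^sub>R x + t *\<^sub>R y) \<le> (1 - t) * neg_part x + t * neg_part y"
    by simp
qed simp

definition expected_neg_part :: "real measure \<Rightarrow> real \<Rightarrow> real \<Rightarrow> real" where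
  "expected_neg_part M b r = (\<integral>\<xi>. neg_part (b + r * \<xi>) \<partial>M)"

locale zero_mean_real_distribution = real_distribution +
  assumes integrable_id: "integrable M (\<lambda>x. x)" and mean_zero: "(\<integral>x. x \<partial>M) = 0"
begin

lemma integrable_affine: "integrable M (\<lambda>\<xi>. b + r * \<xi>)"
  using integrable_id by simp

lemma integral_affine: "(\<integral>\<xi>. b + r * \<xi> \<partial>M) = b"
  using integrable_id mean_zero by (simp add: prob_space[unfolded space_eq_univ])

lemma integrable_neg_part_affine: "integrable M (\<lambda>\<xi>. neg_part (b + r * \<xi>))"
  unfolding neg_part_def using integrable_affine by (intro integrable_max integrable_minus) simp_all

lemma expected_neg_part_0: "expected_neg_part M b 0 = neg_part b"
  by (simp add: expected_neg_part_def prob_space[unfolded space_eq_univ])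

lemma expected_neg_part_antimono: "b \<le> b' \<Longrightarrow> expected_neg_part M b' r \<le> expected_neg_part M b r"
  unfolding expected_neg_part_def
  by (rule integral_mono[OF integrable_neg_part_affine integrable_neg_part_affine]) (simp add: neg_part_def)

lemma neg_part_le_expected_neg_part: "neg_part b \<le> expected_neg_part M b r"
proof -
  have "0 \<le> expected_neg_part M b r"
    unfolding expected_neg_part_def by (rule Bochner_Integration.integral_nonneg) (simp add: neg_part_def)
  moreover have "(\<integral>\<xi>. - (b + r * \<xi>) \<partial>M) \<le> expected_neg_part M b r"
    unfolding expected_neg_part_def
    by (rule integral_mono[OF integrable_minus[OF integrable_affine] integrable_neg_part_affine])
      (simp add: neg_part_def)
  moreover have "(\<integral>\<xi>. - (b + r * \<xi>) \<partial>M) = - b"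
    by (simp only: Bochner_Integration.integral_minus integral_affine)
  ultimately show ?thesis
    by (simp add: neg_part_def)
qed

lemma convex_expected_neg_part: "convex_on UNIV (\<lambda>(b, r). expected_neg_part M b r)"
proof (rule convex_onI)
  fix t :: real and p q :: "real \<times> real" assume t: "0 < t" "t < 1"
  obtain b1 r1 b2 r2 where pq: "p = (b1, r1)" "q = (b2, r2)" by fastforce
  have integrable: "integrable M (\<lambda>\<xi>. (1 - t) * neg_part (b1 + r1 * \<xi>) + t * neg_part (b2 + r2 * \<xi>))"
    by (intro Bochner_Integration.integrable_add integrable_mult_right integrable_neg_part_affine)
  have "expected_neg_part M ((1 - t) * b1 + t * b2) ((1 - t) * r1 + t * r2)
      \<le> (\<integral>\<xi>. (1 - t) * neg_part (b1 + r1 * \<xi>) + t * neg_part (b2 + r2 * \<xi>) \<partial>M)"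
    unfolding expected_neg_part_def
  proof (rule integral_mono[OF integrable_neg_part_affine integrable])
    fix \<xi> :: real
    have "(1 - t) * b1 + t * b2 + ((1 - t) * r1 + t * r2) * \<xi> = (1 - t) * (b1 + r1 * \<xi>) + t * (b2 + r2 * \<xi>)"
      by (simp add: algebra_simps)
    then show "neg_part ((1 - t) * b1 + t * b2 + ((1 - t) * r1 + t * r2) * \<xi>)
        \<le> (1 - t) * neg_part (b1 + r1 * \<xi>) + t * neg_part (b2 + r2 * \<xi>)"
      using convex_onD[OF convex_on_neg_part, of t "b1 + r1 * \<xi>" "b2 + r2 * \<xi>"] t by simp
  qed
  also have "\<dots> = (1 - t) * expected_neg_part M b1 r1 + t * expected_neg_part M b2 r2"
    unfolding expected_neg_part_def
    by (simp add: integrable_neg_part_affine)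
  finally show "(\<lambda>(b, r). expected_neg_part M b r) ((1 - t) *\<^sub>R p + t *\<^sub>R q)
      \<le> (1 - t) * (\<lambda>(b, r). expected_neg_part M b r) p + t * (\<lambda>(b, r). expected_neg_part M b r) q"
    by (simp add: pq)
qed simp

lemma ydot_eq_expected_neg_part:
  assumes support: "measure M {-1..1} = 1" and "0 \<le> r"
  shows "ydot etap etam M b r = etap * b - (1 / etam - etap) * expected_neg_part M b r"
proof (cases "r = 0")
  case True
  then show ?thesis by (simp add: ydot_def expected_neg_part_0)
next
  case False
  with \<open>0 \<le> r\<close> have "0 < r" by simp
  have "r * phi M (- b / r) = (\<integral>\<xi>. r * max (- b / r - \<xi>) 0 \<partial>M)"
    using phi_eq_expectation_pos_part[OF support integrable_id] by simp
  also have "\<dots> = expected_neg_part M b r"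
    unfolding expected_neg_part_def
  proof (rule Bochner_Integration.integral_cong[OF refl])
    fix \<xi> :: real
    show "r * max (- b / r - \<xi>) 0 = neg_part (b + r * \<xi>)"
      unfolding neg_part_def max_mult_distrib_left using \<open>0 < r\<close> by (simp add: algebra_simps)
  qed
  finally show ?thesis
    using \<open>0 < r\<close> by (simp add: ydot_def Let_def mult.assoc)
qed

context
  fixes etap etam :: real
  assumes support: "measure M {-1..1} = 1"
    and etap_pos: "0 < etap" and etad_nonneg: "etap \<le> 1 / etam"
begin

lemma ydot_strict_mono:
  assumes "0 \<le> r" "b < b'"
  shows "ydot etap etam M b r < ydot etap etam M b' r"
proof -
  have "(1 / etam - etap) * expected_neg_part M b' r \<le> (1 / etam - etap) * expected_neg_part M b r"
    using expected_neg_part_antimono[of b b' r] assms etad_nonneg by (intro mult_left_mono) auto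
  moreover have "etap * b < etap * b'"
    using assms etap_pos by simp
  ultimately show ?thesis
    unfolding ydot_eq_expected_neg_part[OF support \<open>0 \<le> r\<close>] by linarith
qed

lemma ydot_le_ydot_0:
  assumes "0 \<le> r"
  shows "ydot etap etam M b r \<le> ydot etap etam M b 0"
  using mult_left_mono[OF neg_part_le_expected_neg_part[of b r], of "1 / etam - etap"] etad_nonneg
  by (simp add: ydot_eq_expected_neg_part[OF support] assms expected_neg_part_0)

lemma concave_on_ydot: "concave_on (UNIV \<times> {0..}) (\<lambda>(b, r). ydot etap etam M b r)"
  unfolding concave_on_iff
proof (intro conjI ballI allI impI)
  show "convex (UNIV \<times> {0::real..})"
    by (simp add: convex_Times)
  fix p q :: "real \<times> real" and u v :: real
  assume pq: "p \<in> UNIV \<times> {0..}" "q \<in> UNIV \<times> {0..}" and uv: "0 \<le> u" "0 \<le> v" "u + v = 1"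
  obtain b1 r1 b2 r2 where p: "p = (b1, r1)" and q: "q = (b2, r2)" by fastforce
  have r: "0 \<le> r1" "0 \<le> r2" "0 \<le> u * r1 + v * r2"
    using pq uv by (auto simp: p q)
  have "expected_neg_part M (u * b1 + v * b2) (u * r1 + v * r2)
      \<le> u * expected_neg_part M b1 r1 + v * expected_neg_part M b2 r2"
    using convex_expected_neg_part uv unfolding convex_on_def
    by (auto dest!: bspec[of _ _ "(b1, r1)"] bspec[of _ _ "(b2, r2)"])
  then have "(1 / etam - etap) * expected_neg_part M (u * b1 + v * b2) (u * r1 + v * r2)
      \<le> (1 / etam - etap) * (u * expected_neg_part M b1 r1 + v * expected_neg_part M b2 r2)"
    using etad_nonneg by (intro mult_left_mono) auto
  moreover have "(\<lambda>(b, r). ydot etap etam M b r) (u *\<^sub>R p + v *\<^sub>R q)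
      = etap * (u * b1 + v * b2) - (1 / etam - etap) * expected_neg_part M (u * b1 + v * b2) (u * r1 + v * r2)"
    using ydot_eq_expected_neg_part[OF support r(3)] by (simp add: p q)
  ultimately show "u * (\<lambda>(b, r). ydot etap etam M b r) p + v * (\<lambda>(b, r). ydot etap etam M b r) q
      \<le> (\<lambda>(b, r). ydot etap etam M b r) (u *\<^sub>R p + v *\<^sub>R q)"
    by (simp add: p q r ydot_eq_expected_neg_part[OF support] algebra_simps)
qed

context
  fixes g :: "real \<Rightarrow> real" and y :: real
  assumes level: "\<And>r. 0 \<le> r \<Longrightarrow> ydot etap etam M (g r) r = y"
begin

lemma convex_on_ydot_level_function: "convex_on {0..} g"
  by (rule convex_on_implicit_function[OF concave_on_ydot ydot_strict_mono level]) auto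

lemma ydot_level_function_min_at_0:
  assumes "0 \<le> r"
  shows "g 0 \<le> g r"
proof (rule ccontr)
  assume "\<not> g 0 \<le> g r"
  then have "ydot etap etam M (g r) r < ydot etap etam M (g 0) r"
    using ydot_strict_mono[OF assms] by simp
  also have "\<dots> \<le> ydot etap etam M (g 0) 0"
    using ydot_le_ydot_0[OF assms] .
  finally show False
    using level[OF assms] level[of 0] by simp
qed

end

end

end

theorem theorem2:
  fixes etap etam ystar T cb cr xbar :: real
    and M :: "real measure" and g :: "real \<Rightarrow> real"
  assumes "0 < etap" "etap \<le> 1" "0 < etam" "etam \<le> 1"
    and "prob_space M" "sets M = sets borel" "measure M {-1..1} = 1"
    and "integrable M (\<lambda>x. x)" "(\<integral>x. x \<partial>M) = 0"
    and g: "\<forall>xr\<ge>0. ydot etap etam M (g xr) xr = ystar"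
    and "T > 0" "cb > 0" "cr \<ge> 0" "xbar \<ge> 0"
  defines "xs \<equiv>
     (if xbar = 0 \<or> rderiv g 0 \<ge> cr / cb then 0
      else if xbar > 0 \<and> lderiv g xbar < cr / cb then xbar
      else (LEAST x. x \<in> {x. 0 < x \<and> x \<le> xbar \<and> lderiv g x \<le> cr / cb \<and> cr / cb \<le> rderiv g x}))"
  shows "xs \<in> {0..xbar} \<and>
         (\<forall>x\<in>{0..xbar}. T * (cb * g xs - cr * xs) \<le> T * (cb * g x - cr * x))"
proof -
  interpret zero_mean_real_distribution M
    by (intro zero_mean_real_distribution.intro real_distribution.intro
        real_distribution_axioms.intro zero_mean_real_distribution_axioms.intro) (fact assms)+
  have "etap \<le> 1 / etam"
    using assms(1-4) mult_le_one[of etam etap] by (simp add: field_simps)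
  then have "convex_on {0..} g" and "\<And>r. 0 \<le> r \<Longrightarrow> g 0 \<le> g r"
    using convex_on_ydot_level_function ydot_level_function_min_at_0 assms(7) \<open>0 < etap\<close> g
    by blast+
  moreover have "xs = optimal_reserve g (cr / cb) xbar"
    by (simp add: xs_def optimal_reserve_def)
  ultimately have "xs \<in> {0..xbar}" and "\<forall>x\<in>{0..xbar}. g xs - cr / cb * xs \<le> g x - cr / cb * x"
    using optimal_reserve_minimal[of g xbar "cr / cb"] \<open>0 \<le> xbar\<close> by auto
  moreover have "T * (cb * g y - cr * y) = (T * cb) * (g y - cr / cb * y)" for y
    using \<open>cb > 0\<close> by (simp add: field_simps)
  ultimately show ?thesis
    using \<open>T > 0\<close> \<open>cb > 0\<close> by (simp add: mult_left_mono)
qed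

end
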